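(* Let $(T,[\cdot,\cdot],[\cdot,\cdot,\cdot],\alpha)$ be a Hom-Lie-Yamaguti algebra, and let $\nu:T\times T\to T$ be bilinear and $\omega:T\times T\times T\to T$ trilinear. For $\lambda\in\mathbb{K}$ set $$[x_1,x_2]_\lambda=[x_1,x_2]+\lambda\nu(x_1,x_2),\qquad [x_1,x_2,x_3]_\lambda=[x_1,x_2,x_3]+\lambda\omega(x_1,x_2,x_3).$$ Say that $(\nu,\omega)$ generates a $\lambda$-parameter infinitesimal deformation of $T$ if $(T,[\cdot,\cdot]_\lambda,[\cdot,\cdot,\cdot]_\lambda,\alpha)$ is a Hom-Lie-Yamaguti algebra for every $\lambda$. Then $(\nu,\omega)$ generates a $\lambda$-parameter infinitesimal deformation of $T$ if and only if the following two conditions hold: (i) $(T,\nu,\omega,\alpha)$ is a Hom-Lie-Yamaguti algebra of deformation type; (ii) $(\nu,\omega)$ is a (2,3)-cocycle of $T$ with coefficients in the adjoint representation.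
   Context: Throughout, vector spaces are over an algebraically closed field $\mathbb{K}$ of characteristic different from 2 and 3. A Hom-Lie-Yamaguti algebra (HLYA) is a vector space $T$ with a linear map $\alpha:T\to T$, a bilinear map $[\cdot,\cdot]$ and a trilinear map $[\cdot,\cdot,\cdot]$ on $T$ such that for all $x_i,y_i\in T$: (HLY01) $\alpha([x_1,x_2])=[\alpha(x_1),\alpha(x_2)]$; (HLY02) $\alpha([x_1,x_2,x_3])=[\alpha(x_1),\alpha(x_2),\alpha(x_3)]$; (HLY1) $[x_1,x_2]+[x_2,x_1]=0$; (HLY2) $[x_1,x_2,x_3]+[x_2,x_1,x_3]=0$; (HLY3) $\sum_{\mathrm{cyc}(x_1,x_2,x_3)}([[x_1,x_2],\alpha(x_3)]+[x_1,x_2,x_3])=0$; (HLY4) $[[x_1,x_2],\alpha(x_3),\alpha(y_1)]+[[x_2,x_3],\alpha(x_1),\alpha(y_1)]+[[x_3,x_1],\alpha(x_2),\alpha(y_1)]=0$; (HLY5) $[\alpha(x_1),\alpha(x_2),[y_1,y_2]]=[[x_1,x_2,y_1],\alpha^2(y_2)]+[\alpha^2(y_1),[x_1,x_2,y_2]]$; (HLY6) $[\alpha^2(x_1),\alpha^2(x_2),[y_1,y_2,y_3]]=[[x_1,x_2,y_1],\alpha^2(y_2),\alpha^2(y_3)]+[\alpha^2(y_1),[x_1,x_2,y_2],\alpha^2(y_3)]+[\alpha^2(y_1),\alpha^2(y_2),[x_1,x_2,y_3]]$. A HLYA of deformation type is a vector space $T$ with linear $\alpha:T\to T$, bilinear $\nu:T\times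 T\to T$ and trilinear $\omega:T^3\to T$ satisfying (HLY01), (HLY02), (HLY1), (HLY2), (HLY4), (HLY5), (HLY6) with $[\cdot,\cdot]$ replaced by $\nu$ and $[\cdot,\cdot,\cdot]$ replaced by $\omega$, and, instead of (HLY3), the condition (HLY3') $\nu(\nu(x_1,x_2),\alpha(x_3))+\nu(\nu(x_2,x_3),\alpha(x_1))+\nu(\nu(x_3,x_1),\alpha(x_2))=0$. The adjoint representation of the HLYA $(T,\alpha)$ is the representation on the Hom-vector space $(T,\alpha)$ given by $\rho(x_1)(x_2)=[x_1,x_2]$, $D(x_1,x_2)x_3=[x_1,x_2,x_3]$, $\theta(x_1,x_2)x_3=[x_3,x_1,x_2]$ (here $\beta=\alpha$). For a representation $(\rho,D,\theta)$ on $(V,\beta)$ (in particular the adjoint one), a (2,3)-cocycle is a pair $(\nu,\omega)$ of a bilinear map $\nu:T\times T\to V$ and a trilinear map $\omega:T^3\to V$ such that $\nu(x_1,x_2)=-\nu(x_2,x_1)$, $\omega(x_1,x_2,x_3)=-\omega(x_2,x_1,x_3)$, and for all $x_i,y_i\in T$: (CC01) $\nu(\alpha(x_1),\alpha(x_2))=\beta(\nu(x_1,x_2))$; (CC02) $\omega(\alpha(x_1),\alpha(x_2),\alpha(x_3))=\beta(\omega(x_1,x_2,x_3))$; (CC1) $\sum_{\mathrm{cyc}(x_1,x_2,x_3)}\big(\omega(x_1,x_2,x_3)-\rho(\alpha(x_1))\nu(x_2,x_3)+\nu([x_1,x_2],\alpha(x_3))\big)=0$; (CC2) $\sum_{\mathrm{cyc}(x_1,x_2,x_3)}\big(\theta(\alpha(x_1),\alpha(y_1))\nu(x_2,x_3)+\omega([x_1,x_2],\alpha(x_3),\alpha(y_1))\big)=0$;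 (CC3) $\omega(\alpha(x_1),\alpha(x_2),[y_1,y_2])+D(\alpha(x_1),\alpha(x_2))\nu(y_1,y_2)=\nu([x_1,x_2,y_1],\alpha^2(y_2))+\nu(\alpha^2(y_1),[x_1,x_2,y_2])+\rho(\alpha^2(y_1))\omega(x_1,x_2,y_2)-\rho(\alpha^2(y_2))\omega(x_1,x_2,y_1)$; (CC4) $\omega(\alpha^2(x_1),\alpha^2(x_2),[y_1,y_2,y_3])+D(\alpha^2(x_1),\alpha^2(x_2))\omega(y_1,y_2,y_3)=\omega([x_1,x_2,y_1],\alpha^2(y_2),\alpha^2(y_3))+\omega(\alpha^2(y_1),[x_1,x_2,y_2],\alpha^2(y_3))+\omega(\alpha^2(y_1),\alpha^2(y_2),[x_1,x_2,y_3])+\theta(\alpha^2(y_2),\alpha^2(y_3))\omega(x_1,x_2,y_1)-\theta(\alpha^2(y_1),\alpha^2(y_3))\omega(x_1,x_2,y_2)+D(\alpha^2(y_1),\alpha^2(y_2))\omega(x_1,x_2,y_3)$. *)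

theory Defs
  imports Main "HOL-Computational_Algebra.Polynomial"
begin

definition alg_closed_field :: "'k::field itself \<Rightarrow> bool" where
  "alg_closed_field _ \<longleftrightarrow> (\<forall>p :: 'k poly. degree p > 0 \<longrightarrow> (\<exists>z. poly p z = 0))"

definition bilinear_map ::
  "('k::field \<Rightarrow> 'v::ab_group_add \<Rightarrow> 'v) \<Rightarrow> ('k \<Rightarrow> 'w::ab_group_add \<Rightarrow> 'w) \<Rightarrow> ('v \<Rightarrow> 'v \<Rightarrow> 'w) \<Rightarrow> bool" where
  "bilinear_map sc scw f \<longleftrightarrow>
     (\<forall>y. Vector_Spaces.linear sc scw (\<lambda>x. f x y)) \<and>
     (\<forall>x. Vector_Spaces.linear sc scw (\<lambda>y. f x y))"

definition trilinear_map ::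
  "('k::field \<Rightarrow> 'v::ab_group_add \<Rightarrow> 'v) \<Rightarrow> ('k \<Rightarrow> 'w::ab_group_add \<Rightarrow> 'w) \<Rightarrow> ('v \<Rightarrow> 'v \<Rightarrow> 'v \<Rightarrow> 'w) \<Rightarrow> bool" where
  "trilinear_map sc scw f \<longleftrightarrow>
     (\<forall>y z. Vector_Spaces.linear sc scw (\<lambda>x. f x y z)) \<and>
     (\<forall>x z. Vector_Spaces.linear sc scw (\<lambda>y. f x y z)) \<and>
     (\<forall>x y. Vector_Spaces.linear sc scw (\<lambda>z. f x y z))"

text \<open>Axioms (HLY01),(HLY02),(HLY1),(HLY2),(HLY4),(HLY5),(HLY6), common to both notions.\<close>
definition HLY_common ::
  "('v \<Rightarrow> 'v) \<Rightarrow> ('v \<Rightarrow> 'v \<Rightarrow> 'v) \<Rightarrow> ('v \<Rightarrow> 'v \<Rightarrow> 'v \<Rightarrow> 'v::ab_group_add) \<Rightarrow> bool" where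
  "HLY_common \<alpha> b t \<longleftrightarrow>
    (\<forall>x1 x2. \<alpha> (b x1 x2) = b (\<alpha> x1) (\<alpha> x2)) \<and>
    (\<forall>x1 x2 x3. \<alpha> (t x1 x2 x3) = t (\<alpha> x1) (\<alpha> x2) (\<alpha> x3)) \<and>
    (\<forall>x1 x2. b x1 x2 + b x2 x1 = 0) \<and>
    (\<forall>x1 x2 x3. t x1 x2 x3 + t x2 x1 x3 = 0) \<and>
    (\<forall>x1 x2 x3 y1. t (b x1 x2) (\<alpha> x3) (\<alpha> y1) + t (b x2 x3) (\<alpha> x1) (\<alpha> y1)
        + t (b x3 x1) (\<alpha> x2) (\<alpha> y1) = 0) \<and>
    (\<forall>x1 x2 y1 y2. t (\<alpha> x1) (\<alpha> x2) (b y1 y2) =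
        b (t x1 x2 y1) (\<alpha> (\<alpha> y2)) + b (\<alpha> (\<alpha> y1)) (t x1 x2 y2)) \<and>
    (\<forall>x1 x2 y1 y2 y3. t (\<alpha> (\<alpha> x1)) (\<alpha> (\<alpha> x2)) (t y1 y2 y3) =
        t (t x1 x2 y1) (\<alpha> (\<alpha> y2)) (\<alpha> (\<alpha> y3))
      + t (\<alpha> (\<alpha> y1)) (t x1 x2 y2) (\<alpha> (\<alpha> y3))
      + t (\<alpha> (\<alpha> y1)) (\<alpha> (\<alpha> y2)) (t x1 x2 y3))"

definition HLYA ::
  "('k::field \<Rightarrow> 'v::ab_group_add \<Rightarrow> 'v) \<Rightarrow> ('v \<Rightarrow> 'v) \<Rightarrow> ('v \<Rightarrow> 'v \<Rightarrow> 'v) \<Rightarrow> ('v \<Rightarrow> 'v \<Rightarrow> 'v \<Rightarrow> 'v) \<Rightarrow> bool" where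
  "HLYA sc \<alpha> b t \<longleftrightarrow>
    Vector_Spaces.linear sc sc \<alpha> \<and> bilinear_map sc sc b \<and> trilinear_map sc sc t \<and>
    HLY_common \<alpha> b t \<and>
    (\<forall>x1 x2 x3. (b (b x1 x2) (\<alpha> x3) + t x1 x2 x3) + (b (b x2 x3) (\<alpha> x1) + t x2 x3 x1)
        + (b (b x3 x1) (\<alpha> x2) + t x3 x1 x2) = 0)"

text \<open>Hom-Lie-Yamaguti algebra of deformation type: (HLY3) replaced by (HLY3').\<close>
definition HLYA_deformation_type ::
  "('k::field \<Rightarrow> 'v::ab_group_add \<Rightarrow> 'v) \<Rightarrow> ('v \<Rightarrow> 'v) \<Rightarrow> ('v \<Rightarrow> 'v \<Rightarrow> 'v) \<Rightarrow> ('v \<Rightarrow> 'v \<Rightarrow> 'v \<Rightarrow> 'v) \<Rightarrow> bool" where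
  "HLYA_deformation_type sc \<alpha> \<nu> \<omega> \<longleftrightarrow>
    Vector_Spaces.linear sc sc \<alpha> \<and> bilinear_map sc sc \<nu> \<and> trilinear_map sc sc \<omega> \<and>
    HLY_common \<alpha> \<nu> \<omega> \<and>
    (\<forall>x1 x2 x3. \<nu> (\<nu> x1 x2) (\<alpha> x3) + \<nu> (\<nu> x2 x3) (\<alpha> x1) + \<nu> (\<nu> x3 x1) (\<alpha> x2) = 0)"

definition cocycle23 ::
  "('k::field \<Rightarrow> 'v::ab_group_add \<Rightarrow> 'v) \<Rightarrow> ('k \<Rightarrow> 'w::ab_group_add \<Rightarrow> 'w) \<Rightarrow>
   ('v \<Rightarrow> 'v) \<Rightarrow> ('v \<Rightarrow> 'v \<Rightarrow> 'v) \<Rightarrow> ('v \<Rightarrow> 'v \<Rightarrow> 'v \<Rightarrow> 'v) \<Rightarrow>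
   ('w \<Rightarrow> 'w) \<Rightarrow> ('v \<Rightarrow> 'w \<Rightarrow> 'w) \<Rightarrow> ('v \<Rightarrow> 'v \<Rightarrow> 'w \<Rightarrow> 'w) \<Rightarrow> ('v \<Rightarrow> 'v \<Rightarrow> 'w \<Rightarrow> 'w) \<Rightarrow>
   ('v \<Rightarrow> 'v \<Rightarrow> 'w) \<Rightarrow> ('v \<Rightarrow> 'v \<Rightarrow> 'v \<Rightarrow> 'w) \<Rightarrow> bool" where
  "cocycle23 sc scw \<alpha> b t \<beta> \<rho> D \<theta> \<nu> \<omega> \<longleftrightarrow>
    bilinear_map sc scw \<nu> \<and> trilinear_map sc scw \<omega> \<and>
    (\<forall>x1 x2. \<nu> x1 x2 = - \<nu> x2 x1) \<and>
    (\<forall>x1 x2 x3. \<omega> x1 x2 x3 = - \<omega> x2 x1 x3) \<and>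
    (\<forall>x1 x2. \<nu> (\<alpha> x1) (\<alpha> x2) = \<beta> (\<nu> x1 x2)) \<and>
    (\<forall>x1 x2 x3. \<omega> (\<alpha> x1) (\<alpha> x2) (\<alpha> x3) = \<beta> (\<omega> x1 x2 x3)) \<and>
    (\<forall>x1 x2 x3.
       (\<omega> x1 x2 x3 - \<rho> (\<alpha> x1) (\<nu> x2 x3) + \<nu> (b x1 x2) (\<alpha> x3))
     + (\<omega> x2 x3 x1 - \<rho> (\<alpha> x2) (\<nu> x3 x1) + \<nu> (b x2 x3) (\<alpha> x1))
     + (\<omega> x3 x1 x2 - \<rho> (\<alpha> x3) (\<nu> x1 x2) + \<nu> (b x3 x1) (\<alpha> x2)) = 0) \<and>
    (\<forall>x1 x2 x3 y1.
       (\<theta> (\<alpha> x1) (\<alpha> y1) (\<nu> x2 x3) + \<omega> (b x1 x2) (\<alpha> x3) (\<alpha> y1))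
     + (\<theta> (\<alpha> x2) (\<alpha> y1) (\<nu> x3 x1) + \<omega> (b x2 x3) (\<alpha> x1) (\<alpha> y1))
     + (\<theta> (\<alpha> x3) (\<alpha> y1) (\<nu> x1 x2) + \<omega> (b x3 x1) (\<alpha> x2) (\<alpha> y1)) = 0) \<and>
    (\<forall>x1 x2 y1 y2.
       \<omega> (\<alpha> x1) (\<alpha> x2) (b y1 y2) + D (\<alpha> x1) (\<alpha> x2) (\<nu> y1 y2) =
       \<nu> (t x1 x2 y1) (\<alpha> (\<alpha> y2)) + \<nu> (\<alpha> (\<alpha> y1)) (t x1 x2 y2)
       + \<rho> (\<alpha> (\<alpha> y1)) (\<omega> x1 x2 y2) - \<rho> (\<alpha> (\<alpha> y2)) (\<omega> x1 x2 y1)) \<and>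
    (\<forall>x1 x2 y1 y2 y3.
       \<omega> (\<alpha> (\<alpha> x1)) (\<alpha> (\<alpha> x2)) (t y1 y2 y3) + D (\<alpha> (\<alpha> x1)) (\<alpha> (\<alpha> x2)) (\<omega> y1 y2 y3) =
       \<omega> (t x1 x2 y1) (\<alpha> (\<alpha> y2)) (\<alpha> (\<alpha> y3))
       + \<omega> (\<alpha> (\<alpha> y1)) (t x1 x2 y2) (\<alpha> (\<alpha> y3))
       + \<omega> (\<alpha> (\<alpha> y1)) (\<alpha> (\<alpha> y2)) (t x1 x2 y3)
       + \<theta> (\<alpha> (\<alpha> y2)) (\<alpha> (\<alpha> y3)) (\<omega> x1 x2 y1)
       - \<theta> (\<alpha> (\<alpha> y1)) (\<alpha> (\<alpha> y3)) (\<omega> x1 x2 y2)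
       + D (\<alpha> (\<alpha> y1)) (\<alpha> (\<alpha> y2)) (\<omega> x1 x2 y3))"

definition adjoint_cocycle23 ::
  "('k::field \<Rightarrow> 'v::ab_group_add \<Rightarrow> 'v) \<Rightarrow> ('v \<Rightarrow> 'v) \<Rightarrow> ('v \<Rightarrow> 'v \<Rightarrow> 'v) \<Rightarrow> ('v \<Rightarrow> 'v \<Rightarrow> 'v \<Rightarrow> 'v) \<Rightarrow>
   ('v \<Rightarrow> 'v \<Rightarrow> 'v) \<Rightarrow> ('v \<Rightarrow> 'v \<Rightarrow> 'v \<Rightarrow> 'v) \<Rightarrow> bool" where
  "adjoint_cocycle23 sc \<alpha> b t \<nu> \<omega> \<longleftrightarrow>
    cocycle23 sc sc \<alpha> b t \<alpha> (\<lambda>x1 x2. b x1 x2) (\<lambda>x1 x2 x3. t x1 x2 x3)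
      (\<lambda>x1 x2 x3. t x3 x1 x2) \<nu> \<omega>"

definition generates_infinitesimal_deformation ::
  "('k::field \<Rightarrow> 'v::ab_group_add \<Rightarrow> 'v) \<Rightarrow> ('v \<Rightarrow> 'v) \<Rightarrow> ('v \<Rightarrow> 'v \<Rightarrow> 'v) \<Rightarrow> ('v \<Rightarrow> 'v \<Rightarrow> 'v \<Rightarrow> 'v) \<Rightarrow>
   ('v \<Rightarrow> 'v \<Rightarrow> 'v) \<Rightarrow> ('v \<Rightarrow> 'v \<Rightarrow> 'v \<Rightarrow> 'v) \<Rightarrow> bool" where
  "generates_infinitesimal_deformation sc \<alpha> b t \<nu> \<omega> \<longleftrightarrow>
    (\<forall>c::'k. HLYA sc \<alpha> (\<lambda>x1 x2. b x1 x2 + sc c (\<nu> x1 x2))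
                      (\<lambda>x1 x2 x3. t x1 x2 x3 + sc c (\<omega> x1 x2 x3)))"

end

theory Submission
  imports Defs
begin

text \<open>Every axiom of a Hom-Lie-Yamaguti algebra, evaluated on the deformed operations
  $[\cdot,\cdot]_\lambda$ and $[\cdot,\cdot,\cdot]_\lambda$, is a polynomial identity of degree at
  most two in $\lambda$. Over a field with $2 \neq 0$ such an identity holds for all $\lambda$ iff
  each coefficient vanishes (evaluate at $\lambda = 0, 1, -1$). The constant coefficient vanishes
  because $T$ itself is a Hom-Lie-Yamaguti algebra, the quadratic coefficients are exactly the
  axioms of deformation type for $(\nu,\omega)$, and the linear coefficients are, after using the
  skew-symmetry of $[\cdot,\cdot]$ and $[\cdot,\cdot,\cdot]$, exactly the (2,3)-cocycle conditions
  for the adjoint representation.\<close>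

context vector_space
begin

lemma scale_quadratic_eq_0_iff:
  assumes "(2::'a) \<noteq> 0"
  shows "(\<forall>c. u + scale c v + scale (c * c) w = 0) \<longleftrightarrow> u = 0 \<and> v = 0 \<and> w = 0"
proof
  assume vanish: "\<forall>c. u + scale c v + scale (c * c) w = 0"
  have "u = 0" using vanish[rule_format, of 0] by simp
  have "v + w = 0" using vanish[rule_format, of 1] \<open>u = 0\<close> by simp
  moreover have "- v + w = 0" using vanish[rule_format, of "-1"] \<open>u = 0\<close> by (simp add: scale_minus_left)
  moreover have "scale 2 w = (v + w) + (- v + w)"
    by (simp add: scale_left_distrib[of 1 1, simplified])
  ultimately have "scale 2 w = 0" by simp
  then have "w = 0" using assms by simp
  with \<open>u = 0\<close> \<open>v + w = 0\<close> show "u = 0 \<and> v = 0 \<and> w = 0" by simp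
qed simp

lemma quadratic_identity_iff:
  assumes "(2::'a) \<noteq> 0"
    and "\<And>c. L c - R c = (L 0 - R 0) + scale c (A - B) + scale (c * c) (C - D)"
    and "L 0 = R 0"
  shows "(\<forall>c. L c = R c) \<longleftrightarrow> A = B \<and> C = D"
proof -
  have "L c = R c \<longleftrightarrow> 0 + scale c (A - B) + scale (c * c) (C - D) = 0" for c
    using assms(2)[of c] assms(3) by (metis diff_self right_minus_eq)
  then show ?thesis
    using scale_quadratic_eq_0_iff[OF assms(1), of 0 "A - B" "C - D"] by simp
qed

end

lemma linearD:
  assumes "Vector_Spaces.linear sc scw f"
  shows "f (x + y) = f x + f y" "f (sc c x) = scw c (f x)"
  using assms unfolding Vector_Spaces.linear_iff by auto

lemma bilinear_mapD:
  assumes "bilinear_map sc scw f"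
  shows "f (x + y) z = f x z + f y z" "f (sc c x) z = scw c (f x z)"
    "f x (y + z) = f x y + f x z" "f x (sc c y) = scw c (f x y)"
  using assms unfolding bilinear_map_def Vector_Spaces.linear_iff by auto

lemma trilinear_mapD:
  assumes "trilinear_map sc scw f"
  shows "f (x + y) z u = f x z u + f y z u" "f (sc c x) z u = scw c (f x z u)"
    "f x (y + z) u = f x y u + f x z u" "f x (sc c y) u = scw c (f x y u)"
    "f x z (y + u) = f x z y + f x z u" "f x z (sc c y) = scw c (f x z y)"
  using assms unfolding trilinear_map_def Vector_Spaces.linear_iff by auto

lemma bilinear_map_add_scale:
  assumes "vector_space scw" "bilinear_map sc scw f" "bilinear_map sc scw g"
  shows "bilinear_map sc scw (\<lambda>x y. f x y + scw c (g x y))"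
proof -
  interpret W: vector_space scw by fact
  show ?thesis using assms(2,3) unfolding bilinear_map_def Vector_Spaces.linear_iff
    by (simp add: bilinear_mapD[OF assms(2)] bilinear_mapD[OF assms(3)]
        W.scale_right_distrib W.scale_left_commute[of c] algebra_simps)
qed

lemma trilinear_map_add_scale:
  assumes "vector_space scw" "trilinear_map sc scw f" "trilinear_map sc scw g"
  shows "trilinear_map sc scw (\<lambda>x y z. f x y z + scw c (g x y z))"
proof -
  interpret W: vector_space scw by fact
  show ?thesis using assms(2,3) unfolding trilinear_map_def Vector_Spaces.linear_iff
    by (simp add: trilinear_mapD[OF assms(2)] trilinear_mapD[OF assms(3)]
        W.scale_right_distrib W.scale_left_commute[of c] algebra_simps)
qed

locale HLYA_perturbation = vector_space sc
  for sc :: "'k::field \<Rightarrow> 'v::ab_group_add \<Rightarrow> 'v" +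
  fixes \<alpha> :: "'v \<Rightarrow> 'v"
    and b :: "'v \<Rightarrow> 'v \<Rightarrow> 'v"
    and t :: "'v \<Rightarrow> 'v \<Rightarrow> 'v \<Rightarrow> 'v"
    and \<nu> :: "'v \<Rightarrow> 'v \<Rightarrow> 'v"
    and \<omega> :: "'v \<Rightarrow> 'v \<Rightarrow> 'v \<Rightarrow> 'v"
  assumes two_neq_zero: "(2::'k) \<noteq> 0"
    and HLYA_b_t: "HLYA sc \<alpha> b t"
    and bilinear_\<nu>: "bilinear_map sc sc \<nu>"
    and trilinear_\<omega>: "trilinear_map sc sc \<omega>"
begin

definition deformed_bracket :: "'k \<Rightarrow> 'v \<Rightarrow> 'v \<Rightarrow> 'v" where
  "deformed_bracket c x y = b x y + sc c (\<nu> x y)"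

definition deformed_triple :: "'k \<Rightarrow> 'v \<Rightarrow> 'v \<Rightarrow> 'v \<Rightarrow> 'v" where
  "deformed_triple c x y z = t x y z + sc c (\<omega> x y z)"

lemma linear_\<alpha>: "Vector_Spaces.linear sc sc \<alpha>"
  and bilinear_b: "bilinear_map sc sc b"
  and trilinear_t: "trilinear_map sc sc t"
  and hom_b: "\<alpha> (b x1 x2) = b (\<alpha> x1) (\<alpha> x2)"
  and hom_t: "\<alpha> (t x1 x2 x3) = t (\<alpha> x1) (\<alpha> x2) (\<alpha> x3)"
  and skew_b: "b x1 x2 + b x2 x1 = 0"
  and skew_t: "t x1 x2 x3 + t x2 x1 x3 = 0"
  and HLY4: "t (b x1 x2) (\<alpha> x3) (\<alpha> y1) + t (b x2 x3) (\<alpha> x1) (\<alpha> y1)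
      + t (b x3 x1) (\<alpha> x2) (\<alpha> y1) = 0"
  and HLY5: "t (\<alpha> x1) (\<alpha> x2) (b y1 y2) = b (t x1 x2 y1) (\<alpha> (\<alpha> y2)) + b (\<alpha> (\<alpha> y1)) (t x1 x2 y2)"
  and HLY6: "t (\<alpha> (\<alpha> x1)) (\<alpha> (\<alpha> x2)) (t y1 y2 y3) =
        t (t x1 x2 y1) (\<alpha> (\<alpha> y2)) (\<alpha> (\<alpha> y3))
      + t (\<alpha> (\<alpha> y1)) (t x1 x2 y2) (\<alpha> (\<alpha> y3))
      + t (\<alpha> (\<alpha> y1)) (\<alpha> (\<alpha> y2)) (t x1 x2 y3)"
  and HLY3: "(b (b x1 x2) (\<alpha> x3) + t x1 x2 x3) + (b (b x2 x3) (\<alpha> x1) + t x2 x3 x1)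
      + (b (b x3 x1) (\<alpha> x2) + t x3 x1 x2) = 0"
  using HLYA_b_t unfolding HLYA_def HLY_common_def by (-, meson+)

lemma b_antisym: "b x y = - b y x"
  using skew_b by (metis eq_neg_iff_add_eq_0)

lemma t_antisym: "t x y z = - t y x z"
  using skew_t by (metis eq_neg_iff_add_eq_0)

lemmas multilinear_simps =
  linearD[OF linear_\<alpha>] bilinear_mapD[OF bilinear_b]
  trilinear_mapD[OF trilinear_t] bilinear_mapD[OF bilinear_\<nu>]
  trilinear_mapD[OF trilinear_\<omega>] scale_right_distrib scale_right_diff_distrib

lemma bilinear_deformed_bracket: "bilinear_map sc sc (deformed_bracket c)"
  unfolding deformed_bracket_def[abs_def]
  by (rule bilinear_map_add_scale[OF vector_space_axioms bilinear_b bilinear_\<nu>])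

lemma trilinear_deformed_triple: "trilinear_map sc sc (deformed_triple c)"
  unfolding deformed_triple_def[abs_def]
  by (rule trilinear_map_add_scale[OF vector_space_axioms trilinear_t trilinear_\<omega>])

lemma deformed_bracket_hom_iff:
  "(\<forall>c x1 x2. \<alpha> (deformed_bracket c x1 x2) = deformed_bracket c (\<alpha> x1) (\<alpha> x2)) \<longleftrightarrow>
   (\<forall>x1 x2. \<alpha> (\<nu> x1 x2) = \<nu> (\<alpha> x1) (\<alpha> x2))"
  (is "(\<forall>c x1 x2. ?deformed c x1 x2) \<longleftrightarrow> (\<forall>x1 x2. ?hom x1 x2)")
proof -
  have "(\<forall>c. ?deformed c x1 x2) \<longleftrightarrow> ?hom x1 x2 \<and> (0::'v) = 0" for x1 x2
    by (rule quadratic_identity_iff[OF two_neq_zero])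
      (simp add: deformed_bracket_def multilinear_simps algebra_simps,
       simp add: deformed_bracket_def hom_b)
  then show ?thesis by auto
qed

lemma deformed_triple_hom_iff:
  "(\<forall>c x1 x2 x3. \<alpha> (deformed_triple c x1 x2 x3) = deformed_triple c (\<alpha> x1) (\<alpha> x2) (\<alpha> x3)) \<longleftrightarrow>
   (\<forall>x1 x2 x3. \<alpha> (\<omega> x1 x2 x3) = \<omega> (\<alpha> x1) (\<alpha> x2) (\<alpha> x3))"
  (is "(\<forall>c x1 x2 x3. ?deformed c x1 x2 x3) \<longleftrightarrow> (\<forall>x1 x2 x3. ?hom x1 x2 x3)")
proof -
  have "(\<forall>c. ?deformed c x1 x2 x3) \<longleftrightarrow> ?hom x1 x2 x3 \<and> (0::'v) = 0" for x1 x2 x3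
    by (rule quadratic_identity_iff[OF two_neq_zero])
      (simp add: deformed_triple_def multilinear_simps algebra_simps,
       simp add: deformed_triple_def hom_t)
  then show ?thesis by auto
qed

lemma deformed_bracket_skew_iff:
  "(\<forall>c x1 x2. deformed_bracket c x1 x2 + deformed_bracket c x2 x1 = 0) \<longleftrightarrow>
   (\<forall>x1 x2. \<nu> x1 x2 + \<nu> x2 x1 = 0)"
  (is "(\<forall>c x1 x2. ?deformed c x1 x2) \<longleftrightarrow> (\<forall>x1 x2. ?skew x1 x2)")
proof -
  have "(\<forall>c. ?deformed c x1 x2) \<longleftrightarrow> ?skew x1 x2 \<and> (0::'v) = 0" for x1 x2
    by (rule quadratic_identity_iff[OF two_neq_zero])
      (simp add: deformed_bracket_def multilinear_simps algebra_simps,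
       simp add: deformed_bracket_def skew_b)
  then show ?thesis by auto
qed

lemma deformed_triple_skew_iff:
  "(\<forall>c x1 x2 x3. deformed_triple c x1 x2 x3 + deformed_triple c x2 x1 x3 = 0) \<longleftrightarrow>
   (\<forall>x1 x2 x3. \<omega> x1 x2 x3 + \<omega> x2 x1 x3 = 0)"
  (is "(\<forall>c x1 x2 x3. ?deformed c x1 x2 x3) \<longleftrightarrow> (\<forall>x1 x2 x3. ?skew x1 x2 x3)")
proof -
  have "(\<forall>c. ?deformed c x1 x2 x3) \<longleftrightarrow> ?skew x1 x2 x3 \<and> (0::'v) = 0" for x1 x2 x3
    by (rule quadratic_identity_iff[OF two_neq_zero])
      (simp add: deformed_triple_def multilinear_simps algebra_simps,
       simp add: deformed_triple_def skew_t)
  then show ?thesis by auto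
qed

lemma deformed_HLY4_iff:
  "(\<forall>c x1 x2 x3 y1. deformed_triple c (deformed_bracket c x1 x2) (\<alpha> x3) (\<alpha> y1)
      + deformed_triple c (deformed_bracket c x2 x3) (\<alpha> x1) (\<alpha> y1)
      + deformed_triple c (deformed_bracket c x3 x1) (\<alpha> x2) (\<alpha> y1) = 0) \<longleftrightarrow>
   (\<forall>x1 x2 x3 y1. \<omega> (\<nu> x1 x2) (\<alpha> x3) (\<alpha> y1) + \<omega> (\<nu> x2 x3) (\<alpha> x1) (\<alpha> y1)
      + \<omega> (\<nu> x3 x1) (\<alpha> x2) (\<alpha> y1) = 0) \<and>
   (\<forall>x1 x2 x3 y1. (t (\<nu> x2 x3) (\<alpha> x1) (\<alpha> y1) + \<omega> (b x1 x2) (\<alpha> x3) (\<alpha> y1))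
      + (t (\<nu> x3 x1) (\<alpha> x2) (\<alpha> y1) + \<omega> (b x2 x3) (\<alpha> x1) (\<alpha> y1))
      + (t (\<nu> x1 x2) (\<alpha> x3) (\<alpha> y1) + \<omega> (b x3 x1) (\<alpha> x2) (\<alpha> y1)) = 0)"
  (is "(\<forall>c x1 x2 x3 y1. ?deformed c x1 x2 x3 y1) \<longleftrightarrow>
    (\<forall>x1 x2 x3 y1. ?quadratic x1 x2 x3 y1) \<and> (\<forall>x1 x2 x3 y1. ?linear x1 x2 x3 y1)")
proof -
  have "(\<forall>c. ?deformed c x1 x2 x3 y1) \<longleftrightarrow> ?linear x1 x2 x3 y1 \<and> ?quadratic x1 x2 x3 y1"
    for x1 x2 x3 y1
    by (rule quadratic_identity_iff[OF two_neq_zero])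
      (simp add: deformed_triple_def deformed_bracket_def multilinear_simps algebra_simps,
       simp add: deformed_triple_def deformed_bracket_def HLY4)
  then show ?thesis by blast
qed

lemma deformed_HLY5_iff:
  "(\<forall>c x1 x2 y1 y2. deformed_triple c (\<alpha> x1) (\<alpha> x2) (deformed_bracket c y1 y2) =
      deformed_bracket c (deformed_triple c x1 x2 y1) (\<alpha> (\<alpha> y2))
      + deformed_bracket c (\<alpha> (\<alpha> y1)) (deformed_triple c x1 x2 y2)) \<longleftrightarrow>
   (\<forall>x1 x2 y1 y2. \<omega> (\<alpha> x1) (\<alpha> x2) (\<nu> y1 y2) =
      \<nu> (\<omega> x1 x2 y1) (\<alpha> (\<alpha> y2)) + \<nu> (\<alpha> (\<alpha> y1)) (\<omega> x1 x2 y2)) \<and>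
   (\<forall>x1 x2 y1 y2. \<omega> (\<alpha> x1) (\<alpha> x2) (b y1 y2) + t (\<alpha> x1) (\<alpha> x2) (\<nu> y1 y2) =
      \<nu> (t x1 x2 y1) (\<alpha> (\<alpha> y2)) + \<nu> (\<alpha> (\<alpha> y1)) (t x1 x2 y2)
      + b (\<alpha> (\<alpha> y1)) (\<omega> x1 x2 y2) - b (\<alpha> (\<alpha> y2)) (\<omega> x1 x2 y1))"
  (is "(\<forall>c x1 x2 y1 y2. ?deformed c x1 x2 y1 y2) \<longleftrightarrow>
    (\<forall>x1 x2 y1 y2. ?quadratic x1 x2 y1 y2) \<and> (\<forall>x1 x2 y1 y2. ?linear x1 x2 y1 y2)")
proof -
  have "(\<forall>c. ?deformed c x1 x2 y1 y2) \<longleftrightarrow> ?linear x1 x2 y1 y2 \<and> ?quadratic x1 x2 y1 y2"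
    for x1 x2 y1 y2
    by (rule quadratic_identity_iff[OF two_neq_zero])
      (simp add: deformed_triple_def deformed_bracket_def multilinear_simps
         b_antisym[of "\<omega> x1 x2 y1"] algebra_simps,
       simp add: deformed_triple_def deformed_bracket_def HLY5)
  then show ?thesis by blast
qed

lemma deformed_HLY6_iff:
  "(\<forall>c x1 x2 y1 y2 y3. deformed_triple c (\<alpha> (\<alpha> x1)) (\<alpha> (\<alpha> x2)) (deformed_triple c y1 y2 y3) =
      deformed_triple c (deformed_triple c x1 x2 y1) (\<alpha> (\<alpha> y2)) (\<alpha> (\<alpha> y3))
      + deformed_triple c (\<alpha> (\<alpha> y1)) (deformed_triple c x1 x2 y2) (\<alpha> (\<alpha> y3))
      + deformed_triple c (\<alpha> (\<alpha> y1)) (\<alpha> (\<alpha> y2)) (deformed_triple c x1 x2 y3)) \<longleftrightarrow>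
   (\<forall>x1 x2 y1 y2 y3. \<omega> (\<alpha> (\<alpha> x1)) (\<alpha> (\<alpha> x2)) (\<omega> y1 y2 y3) =
      \<omega> (\<omega> x1 x2 y1) (\<alpha> (\<alpha> y2)) (\<alpha> (\<alpha> y3))
      + \<omega> (\<alpha> (\<alpha> y1)) (\<omega> x1 x2 y2) (\<alpha> (\<alpha> y3))
      + \<omega> (\<alpha> (\<alpha> y1)) (\<alpha> (\<alpha> y2)) (\<omega> x1 x2 y3)) \<and>
   (\<forall>x1 x2 y1 y2 y3.
      \<omega> (\<alpha> (\<alpha> x1)) (\<alpha> (\<alpha> x2)) (t y1 y2 y3) + t (\<alpha> (\<alpha> x1)) (\<alpha> (\<alpha> x2)) (\<omega> y1 y2 y3) =
      \<omega> (t x1 x2 y1) (\<alpha> (\<alpha> y2)) (\<alpha> (\<alpha> y3))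
      + \<omega> (\<alpha> (\<alpha> y1)) (t x1 x2 y2) (\<alpha> (\<alpha> y3))
      + \<omega> (\<alpha> (\<alpha> y1)) (\<alpha> (\<alpha> y2)) (t x1 x2 y3)
      + t (\<omega> x1 x2 y1) (\<alpha> (\<alpha> y2)) (\<alpha> (\<alpha> y3))
      - t (\<omega> x1 x2 y2) (\<alpha> (\<alpha> y1)) (\<alpha> (\<alpha> y3))
      + t (\<alpha> (\<alpha> y1)) (\<alpha> (\<alpha> y2)) (\<omega> x1 x2 y3))"
  (is "(\<forall>c x1 x2 y1 y2 y3. ?deformed c x1 x2 y1 y2 y3) \<longleftrightarrow>
    (\<forall>x1 x2 y1 y2 y3. ?quadratic x1 x2 y1 y2 y3) \<and> (\<forall>x1 x2 y1 y2 y3. ?linear x1 x2 y1 y2 y3)")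
proof -
  have "(\<forall>c. ?deformed c x1 x2 y1 y2 y3) \<longleftrightarrow>
      ?linear x1 x2 y1 y2 y3 \<and> ?quadratic x1 x2 y1 y2 y3" for x1 x2 y1 y2 y3
    by (rule quadratic_identity_iff[OF two_neq_zero])
      (simp add: deformed_triple_def multilinear_simps
         t_antisym[of "\<alpha> (\<alpha> y1)" "\<omega> x1 x2 y2"] algebra_simps,
       simp add: deformed_triple_def HLY6[of x1 x2 y1 y2 y3])
  then show ?thesis by blast
qed

lemma deformed_HLY3_iff:
  "(\<forall>c x1 x2 x3.
      (deformed_bracket c (deformed_bracket c x1 x2) (\<alpha> x3) + deformed_triple c x1 x2 x3)
      + (deformed_bracket c (deformed_bracket c x2 x3) (\<alpha> x1) + deformed_triple c x2 x3 x1)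
      + (deformed_bracket c (deformed_bracket c x3 x1) (\<alpha> x2) + deformed_triple c x3 x1 x2) = 0) \<longleftrightarrow>
   (\<forall>x1 x2 x3. \<nu> (\<nu> x1 x2) (\<alpha> x3) + \<nu> (\<nu> x2 x3) (\<alpha> x1) + \<nu> (\<nu> x3 x1) (\<alpha> x2) = 0) \<and>
   (\<forall>x1 x2 x3. (\<omega> x1 x2 x3 - b (\<alpha> x1) (\<nu> x2 x3) + \<nu> (b x1 x2) (\<alpha> x3))
      + (\<omega> x2 x3 x1 - b (\<alpha> x2) (\<nu> x3 x1) + \<nu> (b x2 x3) (\<alpha> x1))
      + (\<omega> x3 x1 x2 - b (\<alpha> x3) (\<nu> x1 x2) + \<nu> (b x3 x1) (\<alpha> x2)) = 0)"
  (is "(\<forall>c x1 x2 x3. ?deformed c x1 x2 x3) \<longleftrightarrow>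
    (\<forall>x1 x2 x3. ?quadratic x1 x2 x3) \<and> (\<forall>x1 x2 x3. ?linear x1 x2 x3)")
proof -
  have "(\<forall>c. ?deformed c x1 x2 x3) \<longleftrightarrow> ?linear x1 x2 x3 \<and> ?quadratic x1 x2 x3" for x1 x2 x3
    by (rule quadratic_identity_iff[OF two_neq_zero])
      (simp add: deformed_triple_def deformed_bracket_def multilinear_simps
         b_antisym[of "\<nu> _ _" "\<alpha> _"] algebra_simps,
       simp add: deformed_triple_def deformed_bracket_def HLY3)
  then show ?thesis by blast
qed

lemma generates_infinitesimal_deformation_iff:
  "generates_infinitesimal_deformation sc \<alpha> b t \<nu> \<omega> \<longleftrightarrow>
   HLYA_deformation_type sc \<alpha> \<nu> \<omega> \<and> adjoint_cocycle23 sc \<alpha> b t \<nu> \<omega>"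
proof -
  have "generates_infinitesimal_deformation sc \<alpha> b t \<nu> \<omega> \<longleftrightarrow>
      (\<forall>c. HLYA sc \<alpha> (deformed_bracket c) (deformed_triple c))"
    by (simp add: generates_infinitesimal_deformation_def deformed_bracket_def[abs_def]
        deformed_triple_def[abs_def])
  \<comment> \<open>(CC01), (CC02) orient these equations opposite to (HLY01), (HLY02).\<close>
  moreover have "(\<forall>x1 x2. \<nu> (\<alpha> x1) (\<alpha> x2) = \<alpha> (\<nu> x1 x2)) \<longleftrightarrow>
      (\<forall>x1 x2. \<alpha> (\<nu> x1 x2) = \<nu> (\<alpha> x1) (\<alpha> x2))"
    and "(\<forall>x1 x2 x3. \<omega> (\<alpha> x1) (\<alpha> x2) (\<alpha> x3) = \<alpha> (\<omega> x1 x2 x3)) \<longleftrightarrow>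
      (\<forall>x1 x2 x3. \<alpha> (\<omega> x1 x2 x3) = \<omega> (\<alpha> x1) (\<alpha> x2) (\<alpha> x3))"
    by auto
  ultimately show ?thesis
    unfolding HLYA_def HLYA_deformation_type_def adjoint_cocycle23_def cocycle23_def HLY_common_def
    by (simp only: all_conj_distrib linear_\<alpha> bilinear_\<nu> trilinear_\<omega> bilinear_deformed_bracket
        trilinear_deformed_triple deformed_bracket_hom_iff deformed_triple_hom_iff
        deformed_bracket_skew_iff deformed_triple_skew_iff deformed_HLY4_iff deformed_HLY5_iff
        deformed_HLY6_iff deformed_HLY3_iff eq_neg_iff_add_eq_0 simp_thms conj_assoc conj_comms)
qed

end

theorem theorem3p1:
  fixes sc :: "'k::field \<Rightarrow> 'v::ab_group_add \<Rightarrow> 'v"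
    and \<alpha> :: "'v \<Rightarrow> 'v"
    and b \<nu> :: "'v \<Rightarrow> 'v \<Rightarrow> 'v"
    and t \<omega> :: "'v \<Rightarrow> 'v \<Rightarrow> 'v \<Rightarrow> 'v"
  assumes "alg_closed_field TYPE('k)"
    and "(2::'k) \<noteq> 0" and "(3::'k) \<noteq> 0"
    and "vector_space sc"
    and "HLYA sc \<alpha> b t"
    and "bilinear_map sc sc \<nu>"
    and "trilinear_map sc sc \<omega>"
  shows "generates_infinitesimal_deformation sc \<alpha> b t \<nu> \<omega> \<longleftrightarrow>
         (HLYA_deformation_type sc \<alpha> \<nu> \<omega> \<and> adjoint_cocycle23 sc \<alpha> b t \<nu> \<omega>)"
proof -
  interpret HLYA_perturbation sc \<alpha> b t \<nu> \<omega>
    using assms(2,4-7) by (simp add: HLYA_perturbation_def HLYA_perturbation_axioms_def)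
  show ?thesis by (rule generates_infinitesimal_deformation_iff)
qed

end
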